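(* Let $M_\bullet=(M_n,\mathrm{tr}_n,e_{n+1})_{n\ge0}$ be a Markov tower of modulus $d$, and fix integers $j\ge0$, $k\ge1$. For $i\ge0$ and $\ell\ge1$ define $f^{i+\ell}_i:=d^{\ell(\ell-1)}(e_{i+\ell}e_{i+\ell-1}\cdots e_{i+1})(e_{i+\ell+1}e_{i+\ell}\cdots e_{i+2})\cdots(e_{i+2\ell-1}e_{i+2\ell-2}\cdots e_{i+\ell})\in M_{i+2\ell}$, and for $n\ge1$ set $g_n:=f^{j+nk}_{j+(n-1)k}\in M_{j+(n+1)k}$. Then $M_{j+k\bullet}:=(M_{j+nk},\mathrm{tr}_{j+nk},g_{n+1})_{n\ge0}$ is a Markov tower of modulus $d^k$ (i.e. the $g_n$ are projections satisfying the Temperley–Lieb–Jones relations with $d^{-2}$ replaced by $d^{-2k}$, $g_n$ implements the trace-preserving conditional expectation $M_{j+nk}\to M_{j+(n-1)k}$, this expectation applied from $M_{j+(n+1)k}$ sends $g_n$ to $d^{-2k}$, and $M_{j+(n+1)k}g_n=M_{j+nk}g_n$).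
   Context: A Markov tower $M_\bullet=(M_n,\mathrm{tr}_n,e_{n+1})_{n\ge0}$ is a sequence of finite-dimensional von Neumann algebras with unital inclusions $M_n\subset M_{n+1}$, faithful tracial states with $\mathrm{tr}_{n+1}|_{M_n}=\mathrm{tr}_n$, and projections $e_n\in M_{n+1}$ ($n\ge1$) such that: (M1) $e_i=e_i^2=e_i^*$, $e_ie_j=e_je_i$ for $|i-j|>1$, and $e_ie_{i\pm1}e_i=d^{-2}e_i$ for a fixed $d>0$ (the modulus); (M2) $e_nxe_n=E_n(x)e_n$ for $x\in M_n$, where $E_n:M_n\to M_{n-1}$ is the trace-preserving conditional expectation; (M3) $E_{n+1}(e_n)=d^{-2}$; (M4) $M_{n+1}e_n=M_ne_n$. *)

theory Defs
  imports Complex_Main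
begin

text \<open>The algebras M n of a Markov tower are
modelled as unital *-subalgebras of this ambient algebra (all sharing its unit),
so that the inclusions M n \<subseteq> M (n+1) are unital.\<close>

definition star_alg :: "(complex \<Rightarrow> 'a::ring_1 \<Rightarrow> 'a) \<Rightarrow> ('a \<Rightarrow> 'a) \<Rightarrow> bool" where
  "star_alg sm star \<longleftrightarrow>
     (\<forall>a b x. sm (a + b) x = sm a x + sm b x) \<and>
     (\<forall>a x y. sm a (x + y) = sm a x + sm a y) \<and>
     (\<forall>a b x. sm (a * b) x = sm a (sm b x)) \<and>
     (\<forall>x. sm 1 x = x) \<and>
     (\<forall>a x y. sm a (x * y) = sm a x * y) \<and>
     (\<forall>a x y. sm a (x * y) = x * sm a y) \<and>
     (\<forall>x y. star (x + y) = star x + star y) \<and>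
     (\<forall>x y. star (x * y) = star y * star x) \<and>
     (\<forall>x. star (star x) = x) \<and>
     (\<forall>a x. star (sm a x) = sm (cnj a) (star x))"

definition fd_star_subalg :: "(complex \<Rightarrow> 'a::ring_1 \<Rightarrow> 'a) \<Rightarrow> ('a \<Rightarrow> 'a) \<Rightarrow> 'a set \<Rightarrow> bool" where
  "fd_star_subalg sm star A \<longleftrightarrow>
     1 \<in> A \<and>
     (\<forall>x\<in>A. \<forall>y\<in>A. x + y \<in> A \<and> x * y \<in> A) \<and>
     (\<forall>a. \<forall>x\<in>A. sm a x \<in> A) \<and>
     (\<forall>x\<in>A. star x \<in> A) \<and>
     (\<exists>B. finite B \<and> B \<subseteq> A \<and> (\<forall>x\<in>A. \<exists>c. x = (\<Sum>b\<in>B. sm (c b) b)))"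

definition faithful_tracial_state ::
  "(complex \<Rightarrow> 'a::ring_1 \<Rightarrow> 'a) \<Rightarrow> ('a \<Rightarrow> 'a) \<Rightarrow> 'a set \<Rightarrow> ('a \<Rightarrow> complex) \<Rightarrow> bool" where
  "faithful_tracial_state sm star A t \<longleftrightarrow>
     (\<forall>x\<in>A. \<forall>y\<in>A. t (x + y) = t x + t y) \<and>
     (\<forall>a. \<forall>x\<in>A. t (sm a x) = a * t x) \<and>
     (\<forall>x\<in>A. \<forall>y\<in>A. t (x * y) = t (y * x)) \<and>
     t 1 = 1 \<and>
     (\<forall>x\<in>A. t (star x * x) \<in> \<real> \<and> Re (t (star x * x)) \<ge> 0) \<and>
     (\<forall>x\<in>A. t (star x * x) = 0 \<longrightarrow> x = 0)"

text \<open>The trace-preserving conditional expectation onto N with respect to the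
trace t: the unique y \<in> N with t(y z) = t(x z) for all z \<in> N.\<close>
definition cexp :: "('a::ring_1 \<Rightarrow> complex) \<Rightarrow> 'a set \<Rightarrow> 'a \<Rightarrow> 'a" where
  "cexp t N x = (THE y. y \<in> N \<and> (\<forall>z\<in>N. t (y * z) = t (x * z)))"

definition markov_tower ::
  "(complex \<Rightarrow> 'a::ring_1 \<Rightarrow> 'a) \<Rightarrow> ('a \<Rightarrow> 'a) \<Rightarrow> (nat \<Rightarrow> 'a set) \<Rightarrow> (nat \<Rightarrow> 'a \<Rightarrow> complex)
     \<Rightarrow> (nat \<Rightarrow> 'a) \<Rightarrow> real \<Rightarrow> bool" where
  "markov_tower sm star M tr e d \<longleftrightarrow>
     star_alg sm star \<and> d > 0 \<and>
     (\<forall>n. fd_star_subalg sm star (M n)) \<and>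
     (\<forall>n. M n \<subseteq> M (Suc n)) \<and>
     (\<forall>n. faithful_tracial_state sm star (M n) (tr n)) \<and>
     (\<forall>n. \<forall>x\<in>M n. tr (Suc n) x = tr n x) \<and>
     (\<forall>n\<ge>1. e n \<in> M (Suc n)) \<and>
     \<comment> \<open>(M1)\<close>
     (\<forall>n\<ge>1. e n * e n = e n \<and> star (e n) = e n) \<and>
     (\<forall>i\<ge>1. \<forall>j\<ge>1. (i + 1 < j \<or> j + 1 < i) \<longrightarrow> e i * e j = e j * e i) \<and>
     (\<forall>i\<ge>1. e i * e (Suc i) * e i = sm (complex_of_real (1 / d\<^sup>2)) (e i)) \<and>
     (\<forall>i\<ge>1. e (Suc i) * e i * e (Suc i) = sm (complex_of_real (1 / d\<^sup>2)) (e (Suc i))) \<and>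
     \<comment> \<open>(M2)\<close>
     (\<forall>n\<ge>1. \<forall>x\<in>M n. e n * x * e n = cexp (tr n) (M (n - 1)) x * e n) \<and>
     \<comment> \<open>(M3)\<close>
     (\<forall>n\<ge>1. cexp (tr (Suc n)) (M n) (e n) = sm (complex_of_real (1 / d\<^sup>2)) 1) \<and>
     \<comment> \<open>(M4)\<close>
     (\<forall>n\<ge>1. (\<lambda>x. x * e n) ` M (Suc n) = (\<lambda>x. x * e n) ` M n)"

definition desc_prod :: "(nat \<Rightarrow> 'a::monoid_mult) \<Rightarrow> nat \<Rightarrow> nat \<Rightarrow> 'a" where
  "desc_prod e a b = prod_list (map e (rev [b..<Suc a]))"

definition jw_f :: "(complex \<Rightarrow> 'a::ring_1 \<Rightarrow> 'a) \<Rightarrow> (nat \<Rightarrow> 'a) \<Rightarrow> real \<Rightarrow> nat \<Rightarrow> nat \<Rightarrow> 'a" where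
  "jw_f sm e d i l = sm (complex_of_real (d ^ (l * (l - 1))))
      (prod_list (map (\<lambda>r. desc_prod e (i + l + r) (i + 1 + r)) [0..<l]))"

end

theory Submission
  imports Defs
begin

text \<open>Write W = grid e a l l for the unnormalised word of f^{a+l}_a, so that
  f = d^(l(l-1)) W. Peeling off one hook of generators and collapsing the zigzag
  e_q ... e_(r+1) x e_(r+1) ... e_q to E(x) e_q by (M2) and the Temperley--Lieb relations, an
  induction on l gives W x W = d^(-l(l-1)) E(x) W for x in M_(a+l), with E the trace-preserving
  expectation onto M_a, and the Markov property tr(W z) = d^(-l(l+1)) tr z. Hence f is a
  projection implementing E, and E_(M_(a+l))(f) = d^(-2l). The relation
  f_(a+l) f_a f_(a+l) = d^(-2l) f_(a+l) is then the implementing property applied to f_a, and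
  the dual relation follows from it and the trace condition by faithfulness. For (M4), x W with
  x in M_(a+2l) is pushed down one level at a time using (M4) for a single e and the fact that W
  absorbs the caps e_(a+1) and e_(a+2l-1) alike.\<close>

section \<open>Trace-preserving conditional expectations\<close>

locale star_algebra =
  fixes sm :: "complex \<Rightarrow> 'a::ring_1 \<Rightarrow> 'a" and star :: "'a \<Rightarrow> 'a"
  assumes star_alg: "star_alg sm star"
begin

lemma sm_add_left: "sm (a + b) x = sm a x + sm b x"
  using star_alg unfolding star_alg_def by metis
lemma sm_add_right: "sm a (x + y) = sm a x + sm a y"
  using star_alg unfolding star_alg_def by metis
lemma sm_sm: "sm a (sm b x) = sm (a * b) x"
  using star_alg unfolding star_alg_def by metis
lemma sm_one: "sm 1 x = x"
  using star_alg unfolding star_alg_def by metis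
lemma sm_mult_left: "sm a x * y = sm a (x * y)"
  using star_alg unfolding star_alg_def by metis
lemma sm_mult_right: "x * sm a y = sm a (x * y)"
  using star_alg unfolding star_alg_def by metis
lemma star_add: "star (x + y) = star x + star y"
  using star_alg unfolding star_alg_def by metis
lemma star_mult: "star (x * y) = star y * star x"
  using star_alg unfolding star_alg_def by metis
lemma star_star: "star (star x) = x"
  using star_alg unfolding star_alg_def by metis
lemma star_sm: "star (sm a x) = sm (cnj a) (star x)"
  using star_alg unfolding star_alg_def by metis

lemma sm_zero_left: "sm 0 x = 0"
  using sm_add_left[of 0 0 x] by simp
lemma sm_zero_right: "sm a 0 = 0"
  using sm_add_right[of a 0 0] by simp
lemma sm_minus_left: "sm (- a) x = - sm a x"
  using sm_add_left[of a "- a" x] by (simp add: sm_zero_left minus_unique)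
lemma sm_minus_right: "sm a (- x) = - sm a x"
  using sm_add_right[of a x "- x"] by (simp add: sm_zero_right minus_unique)
lemma sm_diff_right: "sm a (x - y) = sm a x - sm a y"
  using sm_add_right[of a x "- y"] by (simp add: sm_minus_right)

lemma star_zero: "star 0 = 0"
  using star_add[of 0 0] by simp
lemma star_diff: "star (x - y) = star x - star y"
  using star_add[of "x - y" y] by (simp add: eq_diff_eq)
lemma star_one: "star 1 = 1"
  using star_mult[of "star 1" 1] by (simp add: star_star)
lemma star_prod_list: "star (prod_list xs) = prod_list (rev (map star xs))"
  by (induction xs) (simp_all add: star_one star_mult)

definition rsm :: "real \<Rightarrow> 'a \<Rightarrow> 'a" where
  "rsm r x = sm (complex_of_real r) x"

lemma rsm_rsm: "rsm r (rsm s x) = rsm (r * s) x"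
  unfolding rsm_def by (simp add: sm_sm)
lemma rsm_mult_left: "rsm r x * y = rsm r (x * y)"
  unfolding rsm_def by (rule sm_mult_left)
lemma rsm_mult_right: "x * rsm r y = rsm r (x * y)"
  unfolding rsm_def by (rule sm_mult_right)
lemma rsm_1: "rsm 1 x = x"
  unfolding rsm_def by (simp add: sm_one)
lemma rsm_diff_right: "rsm r (x - y) = rsm r x - rsm r y"
  unfolding rsm_def by (rule sm_diff_right)
lemma star_rsm: "star (rsm r x) = rsm r (star x)"
  unfolding rsm_def by (simp add: star_sm)

context
  fixes A :: "'a set"
  assumes subalg: "fd_star_subalg sm star A"
begin

lemma subalg_one: "1 \<in> A"
  using subalg unfolding fd_star_subalg_def by blast
lemma subalg_add: "x \<in> A \<Longrightarrow> y \<in> A \<Longrightarrow> x + y \<in> A"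
  using subalg unfolding fd_star_subalg_def by blast
lemma subalg_mult: "x \<in> A \<Longrightarrow> y \<in> A \<Longrightarrow> x * y \<in> A"
  using subalg unfolding fd_star_subalg_def by blast
lemma subalg_sm: "x \<in> A \<Longrightarrow> sm a x \<in> A"
  using subalg unfolding fd_star_subalg_def by blast
lemma subalg_star: "x \<in> A \<Longrightarrow> star x \<in> A"
  using subalg unfolding fd_star_subalg_def by blast
lemma subalg_zero: "0 \<in> A"
  using subalg_sm[OF subalg_one, of 0] by (simp add: sm_zero_left)
lemma subalg_diff: "x \<in> A \<Longrightarrow> y \<in> A \<Longrightarrow> x - y \<in> A"
  using subalg_add[of x "sm (- 1) y"] subalg_sm[of y "- 1"] by (simp add: sm_minus_left sm_one)
lemma subalg_rsm: "x \<in> A \<Longrightarrow> rsm r x \<in> A"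
  unfolding rsm_def by (rule subalg_sm)
lemma subalg_sum: "finite S \<Longrightarrow> (\<And>s. s \<in> S \<Longrightarrow> f s \<in> A) \<Longrightarrow> sum f S \<in> A"
  by (induction S rule: finite_induct) (auto intro: subalg_add subalg_zero)
lemma subalg_prod_list: "(\<And>x. x \<in> set xs \<Longrightarrow> x \<in> A) \<Longrightarrow> prod_list xs \<in> A"
  by (induction xs) (auto intro: subalg_mult subalg_one)

end

context
  fixes A :: "'a set" and t :: "'a \<Rightarrow> complex"
  assumes subalg: "fd_star_subalg sm star A"
    and trace: "faithful_tracial_state sm star A t"
begin

lemma trace_add: "x \<in> A \<Longrightarrow> y \<in> A \<Longrightarrow> t (x + y) = t x + t y"
  using trace unfolding faithful_tracial_state_def by blast
lemma trace_sm: "x \<in> A \<Longrightarrow> t (sm a x) = a * t x"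
  using trace unfolding faithful_tracial_state_def by blast
lemma trace_commute: "x \<in> A \<Longrightarrow> y \<in> A \<Longrightarrow> t (x * y) = t (y * x)"
  using trace unfolding faithful_tracial_state_def by blast
lemma trace_diff: "x \<in> A \<Longrightarrow> y \<in> A \<Longrightarrow> t (x - y) = t x - t y"
  using trace_add[of "x - y" y] subalg_diff[OF subalg] by (simp add: eq_diff_eq)
lemma trace_rsm: "x \<in> A \<Longrightarrow> t (rsm r x) = complex_of_real r * t x"
  unfolding rsm_def by (rule trace_sm)

lemma trace_faithful: "x \<in> A \<Longrightarrow> t (x * star x) = 0 \<Longrightarrow> x = 0"
  using trace subalg_star[OF subalg, of x] star_star[of x] star_zero
  unfolding faithful_tracial_state_def by metis

end

definition trace_inner :: "('a \<Rightarrow> complex) \<Rightarrow> 'a \<Rightarrow> 'a \<Rightarrow> complex" where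
  "trace_inner t u v = t (u * star v)"

definition sm_span :: "'a set \<Rightarrow> 'a set" where
  "sm_span B = {y. \<exists>c. y = (\<Sum>b\<in>B. sm (c b) b)}"

lemma sm_span_add:
  assumes "v \<in> sm_span B" "w \<in> sm_span B"
  shows "v + w \<in> sm_span B"
proof -
  obtain c c' where "v = (\<Sum>b\<in>B. sm (c b) b)" "w = (\<Sum>b\<in>B. sm (c' b) b)"
    using assms unfolding sm_span_def by blast
  then have "v + w = (\<Sum>b\<in>B. sm (c b + c' b) b)"
    by (simp add: sum.distrib sm_add_left)
  then show ?thesis unfolding sm_span_def by (intro CollectI exI)
qed

lemma sm_sum: "finite F \<Longrightarrow> sm a (sum f F) = (\<Sum>s\<in>F. sm a (f s))"
  by (induction F rule: finite_induct) (auto simp: sm_zero_right sm_add_right)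

lemma sm_span_sm:
  assumes "finite B" "v \<in> sm_span B"
  shows "sm a v \<in> sm_span B"
proof -
  obtain c where "v = (\<Sum>b\<in>B. sm (c b) b)"
    using assms(2) unfolding sm_span_def by blast
  then have "sm a v = (\<Sum>b\<in>B. sm (a * c b) b)"
    using assms(1) by (simp add: sm_sum sm_sm)
  then show ?thesis unfolding sm_span_def by (intro CollectI exI)
qed

lemma sm_span_diff: "finite B \<Longrightarrow> v \<in> sm_span B \<Longrightarrow> w \<in> sm_span B \<Longrightarrow> v - w \<in> sm_span B"
  using sm_span_add[of v B "sm (- 1) w"] sm_span_sm[of B w "- 1"] by (simp add: sm_minus_left sm_one)

lemma sm_span_subalg:
  "fd_star_subalg sm star A \<Longrightarrow> finite B \<Longrightarrow> B \<subseteq> A \<Longrightarrow> sm_span B \<subseteq> A"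
  unfolding sm_span_def by (auto intro!: subalg_sum subalg_sm)

lemma sm_span_insert:
  assumes "finite B" "b \<notin> B"
  shows "sm_span (insert b B) = {v + sm a b | v a. v \<in> sm_span B}"
proof (intro set_eqI iffI)
  fix y assume "y \<in> sm_span (insert b B)"
  then obtain c where "y = (\<Sum>b'\<in>insert b B. sm (c b') b')"
    unfolding sm_span_def by blast
  then have "y = (\<Sum>b'\<in>B. sm (c b') b') + sm (c b) b"
    using assms by (simp add: add.commute)
  then show "y \<in> {v + sm a b | v a. v \<in> sm_span B}"
    unfolding sm_span_def by blast
next
  fix y assume "y \<in> {v + sm a b | v a. v \<in> sm_span B}"
  then obtain a c where y: "y = (\<Sum>b'\<in>B. sm (c b') b') + sm a b"
    unfolding sm_span_def by blast
  have "(\<Sum>b'\<in>B. sm ((c(b := a)) b') b') = (\<Sum>b'\<in>B. sm (c b') b')"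
    using assms(2) by (intro sum.cong) auto
  then have "y = (\<Sum>b'\<in>insert b B. sm ((c(b := a)) b') b')"
    using assms y by (simp add: add.commute)
  then show "y \<in> sm_span (insert b B)"
    unfolding sm_span_def by (intro CollectI exI)
qed

context
  fixes A :: "'a set" and t :: "'a \<Rightarrow> complex"
  assumes subalg: "fd_star_subalg sm star A"
    and trace: "faithful_tracial_state sm star A t"
begin

lemma trace_zero: "t 0 = 0"
  using trace_diff[OF subalg trace subalg_zero[OF subalg] subalg_zero[OF subalg]] by simp

lemma trace_inner_diff_left:
  "p \<in> A \<Longrightarrow> q \<in> A \<Longrightarrow> v \<in> A \<Longrightarrow> trace_inner t (p - q) v = trace_inner t p v - trace_inner t q v"
  unfolding trace_inner_def
  by (simp add: left_diff_distrib trace_diff[OF subalg trace] subalg_mult[OF subalg] subalg_star[OF subalg])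

lemma trace_inner_sm_left:
  "p \<in> A \<Longrightarrow> v \<in> A \<Longrightarrow> trace_inner t (sm a p) v = a * trace_inner t p v"
  unfolding trace_inner_def
  by (simp add: sm_mult_left trace_sm[OF subalg trace] subalg_mult[OF subalg] subalg_star[OF subalg])

lemma trace_inner_add_right:
  "p \<in> A \<Longrightarrow> v \<in> A \<Longrightarrow> w \<in> A \<Longrightarrow> trace_inner t p (v + w) = trace_inner t p v + trace_inner t p w"
  unfolding trace_inner_def
  by (simp add: star_add distrib_left trace_add[OF subalg trace] subalg_mult[OF subalg] subalg_star[OF subalg])

lemma trace_inner_sm_right:
  "p \<in> A \<Longrightarrow> v \<in> A \<Longrightarrow> trace_inner t p (sm a v) = cnj a * trace_inner t p v"
  unfolding trace_inner_def
  by (simp add: star_sm sm_mult_right trace_sm[OF subalg trace] subalg_mult[OF subalg] subalg_star[OF subalg])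

lemma orthogonal_projection_extend:
  assumes S: "S \<subseteq> A" and u: "u \<in> A" "\<forall>v\<in>S. trace_inner t u v = 0" "trace_inner t u u \<noteq> 0"
    and x: "x \<in> A" and y: "y \<in> S" "\<forall>v\<in>S. trace_inner t (x - y) v = 0"
  defines "c \<equiv> trace_inner t (x - y) u / trace_inner t u u"
  shows "\<forall>v\<in>{w + sm a u | w a. w \<in> S}. trace_inner t (x - (y + sm c u)) v = 0"
proof clarify
  fix w a assume w: "w \<in> S"
  have xyA: "x - y \<in> A" using x y S subalg_diff[OF subalg] by blast
  have cuA: "sm c u \<in> A" using u subalg_sm[OF subalg] by blast
  have auA: "sm a u \<in> A" using u subalg_sm[OF subalg] by blast
  have wA: "w \<in> A" using w S by blast
  have eq: "x - (y + sm c u) = (x - y) - sm c u" by simp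
  have rA: "x - (y + sm c u) \<in> A" unfolding eq using xyA cuA subalg_diff[OF subalg] by blast
  have "trace_inner t (x - (y + sm c u)) w = trace_inner t (x - y) w - c * trace_inner t u w"
    unfolding eq using trace_inner_diff_left[OF xyA cuA wA] trace_inner_sm_left[OF u(1) wA] by simp
  also have "\<dots> = 0" using y(2) u(2) w by simp
  finally have 1: "trace_inner t (x - (y + sm c u)) w = 0" .
  have "trace_inner t (x - (y + sm c u)) u = trace_inner t (x - y) u - c * trace_inner t u u"
    unfolding eq using trace_inner_diff_left[OF xyA cuA u(1)] trace_inner_sm_left[OF u(1) u(1)] by simp
  also have "\<dots> = 0" using u(3) unfolding c_def by simp
  finally have 2: "trace_inner t (x - (y + sm c u)) u = 0" .
  show "trace_inner t (x - (y + sm c u)) (w + sm a u) = 0"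
    using trace_inner_add_right[OF rA wA auA] trace_inner_sm_right[OF rA u(1)] 1 2 by simp
qed

lemma orthogonal_projection_exists:
  assumes "finite B" "B \<subseteq> A" "x \<in> A"
  shows "\<exists>y\<in>sm_span B. \<forall>v\<in>sm_span B. trace_inner t (x - y) v = 0"
  using assms
proof (induction B arbitrary: x rule: finite_induct)
  case empty
  then show ?case
    by (auto simp: sm_span_def trace_inner_def star_zero trace_zero)
next
  case (insert b B)
  let ?S = "sm_span B"
  have S: "?S \<subseteq> A" using sm_span_subalg[OF subalg] insert by blast
  obtain yb where yb: "yb \<in> ?S" "\<forall>v\<in>?S. trace_inner t (b - yb) v = 0"
    using insert by blast
  define u where "u = b - yb"
  have u: "u \<in> A" "\<forall>v\<in>?S. trace_inner t u v = 0"
    unfolding u_def using yb insert(4) S subalg_diff[OF subalg] by auto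
  have span: "sm_span (insert b B) = {w + sm a u | w a. w \<in> ?S}"
  proof (unfold sm_span_insert[OF insert(1,2)], intro set_eqI iffI; clarify)
    fix v a assume "v \<in> ?S"
    then have "v + sm a yb \<in> ?S" using sm_span_add sm_span_sm[OF insert(1)] yb(1) by blast
    moreover have "v + sm a b = (v + sm a yb) + sm a u" unfolding u_def by (simp add: sm_diff_right)
    ultimately show "\<exists>w a'. v + sm a b = w + sm a' u \<and> w \<in> ?S" by blast
  next
    fix w a assume "w \<in> ?S"
    then have "w - sm a yb \<in> ?S" using sm_span_diff[OF insert(1)] sm_span_sm[OF insert(1)] yb(1) by blast
    moreover have "w + sm a u = (w - sm a yb) + sm a b" unfolding u_def by (simp add: sm_diff_right)
    ultimately show "\<exists>v a'. w + sm a u = v + sm a' b \<and> v \<in> ?S" by blast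
  qed
  obtain y where y: "y \<in> ?S" "\<forall>v\<in>?S. trace_inner t (x - y) v = 0"
    using insert by blast
  show ?case
  proof (cases "u = 0")
    case True
    then have "sm_span (insert b B) = ?S" unfolding span by (auto simp: sm_zero_right)
    then show ?thesis using y by blast
  next
    case False
    then have uu: "trace_inner t u u \<noteq> 0"
      using trace_faithful[OF subalg trace] u(1) unfolding trace_inner_def by blast
    define c where "c = trace_inner t (x - y) u / trace_inner t u u"
    have "y + sm c u \<in> sm_span (insert b B)" unfolding span using y(1) by blast
    moreover have "\<forall>v\<in>sm_span (insert b B). trace_inner t (x - (y + sm c u)) v = 0"
      unfolding span c_def by (rule orthogonal_projection_extend[OF S u uu insert(5) y])
    ultimately show ?thesis by blast
  qed
qed

lemma cexp_exists:
  assumes N: "fd_star_subalg sm star N" "N \<subseteq> A" and x: "x \<in> A"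
  shows "\<exists>y\<in>N. \<forall>z\<in>N. t (y * z) = t (x * z)"
proof -
  obtain B where B: "finite B" "B \<subseteq> N" "\<forall>x\<in>N. \<exists>c. x = (\<Sum>b\<in>B. sm (c b) b)"
    using N(1) unfolding fd_star_subalg_def by blast
  have span: "sm_span B = N"
    using sm_span_subalg[OF N(1) B(1,2)] B(3) unfolding sm_span_def by blast
  obtain y where y: "y \<in> N" "\<forall>v\<in>N. trace_inner t (x - y) v = 0"
    using orthogonal_projection_exists[OF B(1) _ x] B(2) N(2) unfolding span by blast
  have "t (y * z) = t (x * z)" if z: "z \<in> N" for z
  proof -
    have "t ((x - y) * z) = 0"
      using y(2) subalg_star[OF N(1) z] unfolding trace_inner_def by (metis star_star)
    moreover have "t ((x - y) * z) = t (x * z) - t (y * z)"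
      using trace_diff[OF subalg trace] subalg_mult[OF subalg] x y(1) z N(2)
      by (simp add: left_diff_distrib subsetD)
    ultimately show ?thesis by simp
  qed
  then show ?thesis using y(1) by blast
qed

lemma cexp_unique:
  assumes N: "fd_star_subalg sm star N" "N \<subseteq> A"
    and y: "y \<in> N" "\<forall>z\<in>N. t (y * z) = t (x * z)"
    and y': "y' \<in> N" "\<forall>z\<in>N. t (y' * z) = t (x * z)"
  shows "y = y'"
proof -
  have w: "y - y' \<in> N" "star (y - y') \<in> N"
    using y y' subalg_diff[OF N(1)] subalg_star[OF N(1)] by blast+
  have "t ((y - y') * star (y - y')) = t (y * star (y - y')) - t (y' * star (y - y'))"
    using trace_diff[OF subalg trace] subalg_mult[OF subalg] y y' w N(2)
    by (simp add: left_diff_distrib subsetD)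
  also have "\<dots> = 0" using y y' w by simp
  finally have "y - y' = 0" using trace_faithful[OF subalg trace] w N(2) by blast
  then show ?thesis by simp
qed

lemma cexp_eqI:
  assumes N: "fd_star_subalg sm star N" "N \<subseteq> A"
    and y: "y \<in> N" "\<forall>z\<in>N. t (y * z) = t (x * z)"
  shows "cexp t N x = y"
  unfolding cexp_def by (rule the_equality) (use y cexp_unique[OF N] in blast)+

lemma
  assumes N: "fd_star_subalg sm star N" "N \<subseteq> A" and x: "x \<in> A"
  shows cexp_mem: "cexp t N x \<in> N" and trace_cexp_mult: "\<forall>z\<in>N. t (cexp t N x * z) = t (x * z)"
  using cexp_exists[OF N x] cexp_eqI[OF N] by metis+

end

text \<open>For a projection p and a self-adjoint q with q p q = c q and t(q p) = c t(p), the
  self-adjoint element z = p q p - c p has t(z z^*) = 0, so faithfulness forces p q p = c p.\<close>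

lemma projection_sandwich_dual:
  assumes subalg: "fd_star_subalg sm star A" and trace: "faithful_tracial_state sm star A t"
    and A: "p \<in> A" "q \<in> A" and p: "p * p = p" "star p = p" and q: "star q = q"
    and qpq: "q * p * q = rsm c q" and tr_qp: "t (q * p) = c * t p"
  shows "p * q * p = rsm c p"
proof -
  define z where "z = p * q * p - rsm c p"
  have pqp: "p * q * p \<in> A" using A subalg_mult[OF subalg] by blast
  have z: "z \<in> A" unfolding z_def using pqp A subalg_diff[OF subalg] subalg_rsm[OF subalg] by blast
  have sz: "star z = z"
    unfolding z_def using p q by (simp add: star_diff star_mult star_rsm mult.assoc)
  have zz: "z * z = rsm (c * c) p - rsm c (p * q * p)"
  proof -
    have "z * z = p * q * (p * p) * q * p - rsm c (p * q * (p * p)) - rsm c ((p * p) * q * p) + rsm (c * c) (p * p)"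
      unfolding z_def by (simp add: algebra_simps rsm_mult_left rsm_mult_right rsm_rsm rsm_diff_right)
    also have "p * q * (p * p) * q * p = rsm c (p * q * p)"
      unfolding p(1) using qpq by (simp add: rsm_mult_left rsm_mult_right mult.assoc)
    finally show ?thesis unfolding p(1) by (simp add: mult.assoc)
  qed
  have trqp: "t (p * q * p) = t (q * p)"
    using trace_commute[OF subalg trace, of "p * q" p] trace_commute[OF subalg trace, of p q] A p(1)
      subalg_mult[OF subalg]
    by (simp add: mult.assoc[symmetric])
  have "t (z * star z) = t (rsm (c * c) p) - t (rsm c (p * q * p))"
    unfolding sz zz using trace_diff[OF subalg trace] subalg_rsm[OF subalg] A pqp by simp
  also have "\<dots> = 0"
    using trace_rsm[OF subalg trace] A pqp tr_qp trqp by (simp add: algebra_simps)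
  finally have "t (z * star z) = 0" .
  then have "z = 0" using trace_faithful[OF subalg trace z] by blast
  then show ?thesis unfolding z_def by simp
qed

end

section \<open>Products of generators\<close>

definition asc_prod :: "(nat \<Rightarrow> 'a::monoid_mult) \<Rightarrow> nat \<Rightarrow> nat \<Rightarrow> 'a" where
  "asc_prod e b a = prod_list (map e [b..<Suc a])"

text \<open>jw_f sm e d i l is grid e i l l scaled by d^(l(l-1)); the rectangular p-by-q shape is
  only needed inside the inductions.\<close>

definition grid :: "(nat \<Rightarrow> 'a::monoid_mult) \<Rightarrow> nat \<Rightarrow> nat \<Rightarrow> nat \<Rightarrow> 'a" where
  "grid e a p q = prod_list (map (\<lambda>r. desc_prod e (a + q + r) (a + 1 + r)) [0..<p])"

lemma desc_prod_Suc: "b \<le> Suc a \<Longrightarrow> desc_prod e (Suc a) b = e (Suc a) * desc_prod e a b"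
  unfolding desc_prod_def by simp

lemma desc_prod_single: "desc_prod e a a = e a"
  unfolding desc_prod_def by simp

lemma desc_prod_low: "b \<le> a \<Longrightarrow> desc_prod e a b = desc_prod e a (Suc b) * e b"
  unfolding desc_prod_def by (simp add: upt_conv_Cons del: upt_Suc)

lemma desc_prod_append:
  assumes "b \<le> Suc c" "c \<le> a"
  shows "desc_prod e a b = desc_prod e a (Suc c) * desc_prod e c b"
proof -
  have "[b..<Suc a] = [b..<Suc c] @ [Suc c..<Suc a]"
    using assms upt_add_eq_append[of b "Suc c" "a - c"] by simp
  then show ?thesis unfolding desc_prod_def by (simp del: upt_Suc)
qed

lemma asc_prod_Suc: "b \<le> Suc a \<Longrightarrow> asc_prod e b (Suc a) = asc_prod e b a * e (Suc a)"
  unfolding asc_prod_def by simp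

lemma asc_prod_single: "asc_prod e a a = e a"
  unfolding asc_prod_def by simp

lemma asc_prod_low: "b \<le> a \<Longrightarrow> asc_prod e b a = e b * asc_prod e (Suc b) a"
  unfolding asc_prod_def by (simp add: upt_conv_Cons del: upt_Suc)

lemma prod_list_commute:
  "(\<And>y. y \<in> set ys \<Longrightarrow> y * x = x * y) \<Longrightarrow> prod_list ys * x = x * (prod_list ys :: 'a::monoid_mult)"
  by (induction ys) (simp_all add: mult.assoc, metis mult.assoc)

lemma desc_prod_commute:
  "(\<And>i. b \<le> i \<Longrightarrow> i \<le> a \<Longrightarrow> e i * x = x * e i) \<Longrightarrow> desc_prod e a b * x = x * desc_prod e a b"
  unfolding desc_prod_def by (rule prod_list_commute) auto

lemma asc_prod_commute:
  "(\<And>i. b \<le> i \<Longrightarrow> i \<le> a \<Longrightarrow> e i * x = x * e i) \<Longrightarrow> asc_prod e b a * x = x * asc_prod e b a"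
  unfolding asc_prod_def by (rule prod_list_commute) auto

lemma grid_commute:
  assumes "\<And>i. a < i \<Longrightarrow> i < a + q + p \<Longrightarrow> e i * x = x * e i"
  shows "grid e a p q * x = x * grid e a p q"
  unfolding grid_def by (rule prod_list_commute) (auto intro!: desc_prod_commute assms)

lemma grid_0: "grid e a 0 q = 1"
  unfolding grid_def by simp

lemma grid_1_1: "grid e a 1 1 = e (Suc a)"
  unfolding grid_def by (simp add: desc_prod_single)

lemma grid_2: "grid e a 2 q = desc_prod e (a + q) (a + 1) * desc_prod e (a + q + 1) (a + 2)"
  unfolding grid_def by (simp add: numeral_2_eq_2)

lemma grid_Suc_first: "grid e a (Suc p) q = desc_prod e (a + q) (a + 1) * grid e (Suc a) p q"
  unfolding grid_def by (simp add: upt_conv_Cons map_Suc_upt[symmetric] comp_def del: upt_Suc)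

lemma grid_Suc_last: "grid e a (Suc p) q = grid e a p q * desc_prod e (a + q + p) (a + 1 + p)"
  unfolding grid_def by simp

section \<open>Markov towers\<close>

locale markov =
  fixes sm :: "complex \<Rightarrow> 'a::ring_1 \<Rightarrow> 'a" and star :: "'a \<Rightarrow> 'a"
    and M :: "nat \<Rightarrow> 'a set" and tr :: "nat \<Rightarrow> 'a \<Rightarrow> complex" and e :: "nat \<Rightarrow> 'a"
    and d :: real
  assumes tower: "markov_tower sm star M tr e d"
begin

sublocale star_algebra sm star
  using tower unfolding markov_tower_def star_algebra_def by blast

abbreviation \<iota> :: real where "\<iota> \<equiv> 1 / d"

lemma iota_sq: "\<iota>\<^sup>2 = 1 / d\<^sup>2"
  by (rule power_one_over)

lemma d_pos: "d > 0"
  using tower unfolding markov_tower_def by (elim conjE) simp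
lemma d_power_iota_power: "d ^ n * \<iota> ^ n = 1"
  using d_pos by (simp add: power_mult_distrib[symmetric])

lemma iota_power: "\<iota> ^ (2 * l) = 1 / (d ^ l)\<^sup>2"
  by (simp add: power_one_over power_mult mult.commute)

lemma subalg_M: "fd_star_subalg sm star (M n)"
  using tower unfolding markov_tower_def by (elim conjE) simp
lemma M_subset_Suc: "M n \<subseteq> M (Suc n)"
  using tower unfolding markov_tower_def by (elim conjE) simp
lemma trace_M: "faithful_tracial_state sm star (M n) (tr n)"
  using tower unfolding markov_tower_def by (elim conjE) simp
lemma tr_Suc: "x \<in> M n \<Longrightarrow> tr (Suc n) x = tr n x"
  using tower unfolding markov_tower_def by (elim conjE) simp
lemma e_in_M_Suc:
  assumes "1 \<le> n"
  shows "e n \<in> M (Suc n)"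
proof -
  have "\<forall>n\<ge>1. e n \<in> M (Suc n)"
    using tower unfolding markov_tower_def by (elim conjE) assumption
  then show ?thesis using assms by blast
qed
lemma
  assumes "1 \<le> n"
  shows e_idem: "e n * e n = e n" and e_star: "star (e n) = e n"
proof -
  have "\<forall>n\<ge>1. e n * e n = e n \<and> star (e n) = e n"
    using tower unfolding markov_tower_def by (elim conjE) assumption
  then show "e n * e n = e n" "star (e n) = e n" using assms by blast+
qed
lemma e_TL_lower:
  assumes "1 \<le> i"
  shows "e i * e (Suc i) * e i = rsm (\<iota>\<^sup>2) (e i)"
proof -
  have "\<forall>i\<ge>1. e i * e (Suc i) * e i = sm (complex_of_real (1 / d\<^sup>2)) (e i)"
    using tower unfolding markov_tower_def by (elim conjE) assumption
  then show ?thesis using assms unfolding rsm_def iota_sq by blast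
qed
lemma e_TL_upper:
  assumes "1 \<le> i"
  shows "e (Suc i) * e i * e (Suc i) = rsm (\<iota>\<^sup>2) (e (Suc i))"
proof -
  have "\<forall>i\<ge>1. e (Suc i) * e i * e (Suc i) = sm (complex_of_real (1 / d\<^sup>2)) (e (Suc i))"
    using tower unfolding markov_tower_def by (elim conjE) assumption
  then show ?thesis using assms unfolding rsm_def iota_sq by blast
qed
lemma e_sandwich:
  assumes "x \<in> M (Suc p)"
  shows "e (Suc p) * x * e (Suc p) = cexp (tr (Suc p)) (M p) x * e (Suc p)"
proof -
  have "\<forall>n\<ge>1. \<forall>x\<in>M n. e n * x * e n = cexp (tr n) (M (n - 1)) x * e n"
    using tower unfolding markov_tower_def by (elim conjE) assumption
  then show ?thesis using assms by simp
qed
lemma cexp_e: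
  assumes "1 \<le> n"
  shows "cexp (tr (Suc n)) (M n) (e n) = rsm (\<iota>\<^sup>2) 1"
proof -
  have "\<forall>n\<ge>1. cexp (tr (Suc n)) (M n) (e n) = sm (complex_of_real (1 / d\<^sup>2)) 1"
    using tower unfolding markov_tower_def by (elim conjE) assumption
  then show ?thesis using assms unfolding rsm_def iota_sq by blast
qed
lemma M_times_e:
  assumes "1 \<le> n" "x \<in> M (Suc n)"
  shows "\<exists>y\<in>M n. x * e n = y * e n"
proof -
  have "\<forall>n\<ge>1. (\<lambda>x. x * e n) ` M (Suc n) = (\<lambda>x. x * e n) ` M n"
    using tower unfolding markov_tower_def by (elim conjE) assumption
  then have "x * e n \<in> (\<lambda>x. x * e n) ` M n" using assms by (metis imageI)
  then show ?thesis by auto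
qed

lemmas M_one = subalg_one[OF subalg_M]
  and M_mult = subalg_mult[OF subalg_M]
  and M_diff = subalg_diff[OF subalg_M]
  and M_rsm = subalg_rsm[OF subalg_M]
  and M_star = subalg_star[OF subalg_M]
  and M_prod_list = subalg_prod_list[OF subalg_M]
  and tr_commute = trace_commute[OF subalg_M trace_M]
  and tr_rsm = trace_rsm[OF subalg_M trace_M]
  and tr_zero = trace_zero[OF subalg_M trace_M]
  and tr_faithful = trace_faithful[OF subalg_M trace_M]

lemma M_mono: "p \<le> q \<Longrightarrow> M p \<subseteq> M q"
  by (induction q rule: dec_induct) (use M_subset_Suc in auto)

lemma M_monoD: "x \<in> M p \<Longrightarrow> p \<le> q \<Longrightarrow> x \<in> M q"
  using M_mono by blast

lemma tr_mono: "p \<le> q \<Longrightarrow> x \<in> M p \<Longrightarrow> tr q x = tr p x"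
  by (induction q rule: dec_induct) (use tr_Suc M_monoD in auto)

lemma e_in_M: "1 \<le> i \<Longrightarrow> i < n \<Longrightarrow> e i \<in> M n"
  using e_in_M_Suc M_monoD by (metis Suc_leI)

lemma cexp_M:
  "p \<le> q \<Longrightarrow> x \<in> M q \<Longrightarrow> cexp (tr q) (M p) x \<in> M p"
  using cexp_mem[OF subalg_M trace_M subalg_M M_mono] .

lemma tr_cexp_mult:
  "p \<le> q \<Longrightarrow> x \<in> M q \<Longrightarrow> z \<in> M p \<Longrightarrow> tr q (cexp (tr q) (M p) x * z) = tr q (x * z)"
  using trace_cexp_mult[OF subalg_M trace_M subalg_M M_mono] by blast

lemma cexp_M_eqI:
  "p \<le> q \<Longrightarrow> y \<in> M p \<Longrightarrow> (\<And>z. z \<in> M p \<Longrightarrow> tr q (y * z) = tr q (x * z)) \<Longrightarrow> cexp (tr q) (M p) x = y"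
  using cexp_eqI[OF subalg_M trace_M subalg_M M_mono] by blast

lemma cexp_id: "p \<le> q \<Longrightarrow> x \<in> M p \<Longrightarrow> cexp (tr q) (M p) x = x"
  by (rule cexp_M_eqI) auto

lemma tr_cexp: "p \<le> q \<Longrightarrow> x \<in> M q \<Longrightarrow> tr q (cexp (tr q) (M p) x) = tr q x"
  using tr_cexp_mult[of p q x 1] M_one by simp

lemma cexp_tower:
  assumes "p \<le> q" "x \<in> M (Suc q)"
  shows "cexp (tr (Suc q)) (M p) x = cexp (tr q) (M p) (cexp (tr (Suc q)) (M q) x)"
proof (rule cexp_M_eqI)
  let ?x' = "cexp (tr (Suc q)) (M q) x"
  have x': "?x' \<in> M q" using assms cexp_M by simp
  show "cexp (tr q) (M p) ?x' \<in> M p" using assms x' cexp_M by blast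
  fix z assume z: "z \<in> M p"
  then have zq: "z \<in> M q" using assms M_monoD by blast
  have "tr (Suc q) (cexp (tr q) (M p) ?x' * z) = tr q (cexp (tr q) (M p) ?x' * z)"
    using assms x' z zq cexp_M M_mult M_monoD by (intro tr_Suc) blast
  also have "\<dots> = tr q (?x' * z)" using assms x' z tr_cexp_mult by blast
  also have "\<dots> = tr (Suc q) (?x' * z)" using x' zq M_mult tr_Suc by simp
  also have "\<dots> = tr (Suc q) (x * z)" using assms zq tr_cexp_mult by simp
  finally show "tr (Suc q) (cexp (tr q) (M p) ?x' * z) = tr (Suc q) (x * z)" .
qed (use assms in simp)

lemma tr_e_mult:
  assumes "1 \<le> n" "y \<in> M n" "n < T"
  shows "tr T (e n * y) = \<iota>\<^sup>2 * tr T y"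
proof -
  have ey: "e n * y \<in> M (Suc n)" and y: "y \<in> M (Suc n)"
    using assms e_in_M_Suc M_monoD M_mult by auto
  have "tr (Suc n) (e n * y) = tr (Suc n) (rsm (\<iota>\<^sup>2) 1 * y)"
    using tr_cexp_mult[of n "Suc n" "e n" y] assms e_in_M_Suc cexp_e by simp
  also have "\<dots> = \<iota>\<^sup>2 * tr (Suc n) y"
    using tr_rsm[OF y] by (simp add: rsm_mult_left)
  finally show ?thesis using tr_mono[of "Suc n" T] ey y assms(3) by simp
qed

lemma tr_mult_e:
  assumes "1 \<le> n" "y \<in> M n" "n < T"
  shows "tr T (y * e n) = \<iota>\<^sup>2 * tr T y"
  using tr_e_mult[OF assms] tr_commute[of y T "e n"] assms M_monoD e_in_M by simp

text \<open>No commutation axiom for the e_i is needed: by (M2), u = e x - e x e satisfies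
  u u^* = 0.\<close>

lemma e_commute_M:
  assumes x: "x \<in> M p" and i: "p < i"
  shows "e i * x = x * e i"
proof -
  obtain q where q: "i = Suc q" and pq: "p \<le> q" using i by (cases i) auto
  have sandwich: "e i * y * e i = y * e i" if "y \<in> M q" for y
    using e_sandwich[of y q] cexp_id[of q "Suc q" y] that M_monoD unfolding q by simp
  have xq: "x \<in> M q" using x pq M_monoD by blast
  have ee: "e i * e i = e i" using e_idem q by simp
  define u where "u = e i * x - e i * x * e i"
  have su: "star u = star x * e i - e i * star x * e i"
    unfolding u_def using e_star q by (simp add: star_diff star_mult mult.assoc)
  have "u * star u = (e i * x - e i * x * e i) * (star x * e i - e i * star x * e i)"
    unfolding su unfolding u_def ..
  also have "\<dots> = e i * (x * star x) * e i - (e i * x * e i) * star x * e i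
      - (e i * x * e i) * star x * e i + (e i * x * (e i * e i)) * star x * e i"
    by (simp add: algebra_simps)
  also have "\<dots> = e i * (x * star x) * e i - x * (e i * star x * e i)"
    unfolding ee sandwich[OF xq] by (simp add: mult.assoc)
  also have "\<dots> = 0"
    using sandwich[of "star x"] sandwich[of "x * star x"] xq M_star M_mult by (simp add: mult.assoc)
  finally have "u * star u = 0" .
  moreover have "u \<in> M (Suc i)"
    unfolding u_def using q xq e_in_M_Suc M_monoD M_mult M_diff by simp
  ultimately have "u = 0" using tr_faithful tr_zero by auto
  then show ?thesis using sandwich[OF xq] unfolding u_def by simp
qed

subsection \<open>Words in the Jones projections\<close>

lemma desc_prod_in_M: "1 \<le> b \<Longrightarrow> a < n \<Longrightarrow> desc_prod e a b \<in> M n"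
  unfolding desc_prod_def by (rule M_prod_list) (auto intro: e_in_M)

lemma asc_prod_in_M: "1 \<le> b \<Longrightarrow> a < n \<Longrightarrow> asc_prod e b a \<in> M n"
  unfolding asc_prod_def by (rule M_prod_list) (auto intro: e_in_M)

lemma grid_in_M: "a + q + p \<le> n \<Longrightarrow> grid e a p q \<in> M n"
  unfolding grid_def by (rule M_prod_list) (auto intro!: desc_prod_in_M)

lemma desc_prod_commute_M: "x \<in> M p \<Longrightarrow> p < b \<Longrightarrow> desc_prod e a b * x = x * desc_prod e a b"
  by (rule desc_prod_commute) (rule e_commute_M, auto)

lemma asc_prod_commute_M: "x \<in> M p \<Longrightarrow> p < b \<Longrightarrow> asc_prod e b a * x = x * asc_prod e b a"
  by (rule asc_prod_commute) (rule e_commute_M, auto)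

lemma grid_commute_M: "x \<in> M p \<Longrightarrow> p \<le> a \<Longrightarrow> grid e a l q * x = x * grid e a l q"
  by (intro grid_commute e_commute_M[of x p]) auto

lemma desc_prod_commute_e:
  assumes "1 \<le> b" "1 \<le> j" "a + 2 \<le> j \<or> j + 2 \<le> b"
  shows "desc_prod e a b * e j = e j * desc_prod e a b"
  using assms desc_prod_commute_M[OF e_in_M_Suc] e_commute_M[OF desc_prod_in_M, of b a "Suc a" j]
  by auto

lemma grid_commute_e: "a + q + p < j \<Longrightarrow> grid e a p q * e j = e j * grid e a p q"
  using e_commute_M[OF grid_in_M, of a q p "a + q + p" j] by simp

lemma star_desc_prod:
  assumes "1 \<le> b"
  shows "star (desc_prod e a b) = asc_prod e b a"
proof -
  have star_e: "map star (map e (rev [b..<Suc a])) = map e (rev [b..<Suc a])"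
    using assms by (auto simp: e_star)
  show ?thesis unfolding desc_prod_def asc_prod_def star_prod_list star_e by (simp add: rev_map)
qed

lemma star_asc_prod: "1 \<le> b \<Longrightarrow> star (asc_prod e b a) = desc_prod e a b"
  using star_desc_prod[of b a] star_star by metis

lemma desc_asc_prod:
  assumes "1 \<le> p" "p \<le> q"
  shows "desc_prod e q p * asc_prod e p q = rsm (\<iota>^(2 * (q - p))) (e q)"
  using assms(2)
proof (induction q rule: dec_induct)
  case base
  show ?case using assms(1) by (simp add: desc_prod_single asc_prod_single e_idem rsm_1)
next
  case (step q)
  have "desc_prod e (Suc q) p * asc_prod e p (Suc q) = e (Suc q) * (desc_prod e q p * asc_prod e p q) * e (Suc q)"
    using step(1) by (simp add: desc_prod_Suc asc_prod_Suc mult.assoc)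
  also have "\<dots> = rsm (\<iota>^(2 * (q - p))) (e (Suc q) * e q * e (Suc q))"
    unfolding step(3) by (simp add: rsm_mult_left rsm_mult_right mult.assoc)
  also have "\<dots> = rsm (\<iota>^(2 * (q - p)) * \<iota>\<^sup>2) (e (Suc q))"
    using e_TL_upper[of q] assms(1) step(1) by (simp add: rsm_rsm)
  also have "\<iota>^(2 * (q - p)) * \<iota>\<^sup>2 = \<iota>^(2 * (Suc q - p))"
    using step(1) by (simp add: Suc_diff_le power_add[symmetric])
  finally show ?case .
qed

lemma desc_sandwich:
  assumes "r < q" and x: "x \<in> M (Suc r)"
  shows "desc_prod e q (Suc r) * x * asc_prod e (Suc r) q
    = rsm (\<iota>^(2 * (q - Suc r))) (cexp (tr (Suc r)) (M r) x * e q)"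
proof -
  let ?y = "cexp (tr (Suc r)) (M r) x"
  have y: "?y \<in> M r" using cexp_M x by simp
  have "desc_prod e q (Suc r) * x * asc_prod e (Suc r) q
      = desc_prod e q (Suc (Suc r)) * (e (Suc r) * x * e (Suc r)) * asc_prod e (Suc (Suc r)) q"
    using assms(1) by (simp add: desc_prod_low asc_prod_low mult.assoc)
  also have "\<dots> = desc_prod e q (Suc (Suc r)) * (?y * e (Suc r)) * asc_prod e (Suc (Suc r)) q"
    unfolding e_sandwich[OF x] ..
  also have "\<dots> = ?y * (desc_prod e q (Suc (Suc r)) * e (Suc r) * asc_prod e (Suc (Suc r)) q)"
    using desc_prod_commute_M[OF y, of "Suc (Suc r)" q] by (simp add: mult.assoc[symmetric])
  also have "desc_prod e q (Suc (Suc r)) * e (Suc r) * asc_prod e (Suc (Suc r)) q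
      = desc_prod e q (Suc (Suc r)) * (e (Suc r) * e (Suc r)) * asc_prod e (Suc (Suc r)) q"
    using e_idem[of "Suc r"] by simp
  also have "\<dots> = desc_prod e q (Suc r) * asc_prod e (Suc r) q"
    using assms(1) by (simp add: desc_prod_low asc_prod_low mult.assoc)
  also have "\<dots> = rsm (\<iota>^(2 * (q - Suc r))) (e q)"
    using desc_asc_prod assms(1) by simp
  finally show ?thesis by (simp add: rsm_mult_right)
qed

lemma grid_Suc_height: "grid e a p (Suc q) = asc_prod e (a + q + 1) (a + q + p) * grid e a p q"
proof (induction p)
  case 0
  show ?case by (simp add: grid_0 asc_prod_def)
next
  case (Suc p)
  have "grid e a (Suc p) (Suc q)
      = asc_prod e (a + q + 1) (a + q + p) * (grid e a p q * e (Suc (a + q + p)))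
        * desc_prod e (a + q + p) (a + 1 + p)"
    using Suc by (simp add: grid_Suc_last desc_prod_Suc mult.assoc)
  also have "\<dots> = (asc_prod e (a + q + 1) (a + q + p) * e (Suc (a + q + p)))
        * (grid e a p q * desc_prod e (a + q + p) (a + 1 + p))"
    by (simp add: grid_commute_e mult.assoc)
  finally show ?case by (simp add: asc_prod_Suc grid_Suc_last)
qed

lemma grid_Suc_Suc_inner:
  "grid e a (Suc l) (Suc l)
    = asc_prod e (Suc (a + l)) (a + 2 * l) * grid e a l l * desc_prod e (Suc (a + 2 * l)) (Suc (a + l))"
  using grid_Suc_last[of e a l "Suc l"] grid_Suc_height[of a l l] by (simp add: mult_2 add.assoc)

lemma grid_Suc_Suc_shift_right:
  "grid e a (Suc l) (Suc l)
    = asc_prod e (Suc (a + l)) (Suc (a + 2 * l)) * desc_prod e (a + l) (a + 1) * grid e (Suc a) l l"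
  using grid_Suc_height[of a "Suc l" l] grid_Suc_first[of e a l l]
  by (simp add: mult_2 mult.assoc add.assoc)

lemma star_grid: "star (grid e a l l) = grid e a l l"
proof (induction l)
  case 0
  show ?case by (simp add: grid_0 star_one)
next
  case (Suc l)
  let ?m = "Suc (a + 2 * l)"
  let ?A = "asc_prod e (Suc (a + l)) (a + 2 * l)" and ?W = "grid e a l l"
  let ?D = "desc_prod e (a + 2 * l) (Suc (a + l))"
  have "star (grid e a (Suc l) (Suc l)) = star (e ?m * ?D) * ?W * star ?A"
    unfolding grid_Suc_Suc_inner using Suc by (simp add: desc_prod_Suc star_mult mult.assoc)
  also have "\<dots> = ?A * (e ?m * ?W) * ?D"
    by (simp add: star_mult star_desc_prod star_asc_prod e_star mult.assoc)
  also have "\<dots> = grid e a (Suc l) (Suc l)"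
    unfolding grid_Suc_Suc_inner grid_commute_e[of a l l ?m, symmetric, simplified]
    by (simp add: desc_prod_Suc mult.assoc)
  finally show ?case .
qed

lemma grid_Suc_Suc_shift_left:
  "grid e a (Suc l) (Suc l)
    = grid e (Suc a) l l * (asc_prod e (a + 1) (a + l) * desc_prod e (Suc (a + 2 * l)) (Suc (a + l)))"
proof -
  have "grid e a (Suc l) (Suc l) = star (grid e a (Suc l) (Suc l))"
    by (simp add: star_grid)
  also have "\<dots> = grid e (Suc a) l l * (asc_prod e (a + 1) (a + l) * desc_prod e (Suc (a + 2 * l)) (Suc (a + l)))"
    unfolding grid_Suc_Suc_shift_right by (simp add: star_mult star_grid star_desc_prod star_asc_prod mult.assoc)
  finally show ?thesis .
qed

lemma e_grid_left:
  assumes i: "i = Suc (a + s)" and p: "1 \<le> p"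
  shows "e i * grid e a (Suc p) (s + Suc p)
    = rsm (\<iota>\<^sup>2) (desc_prod e (i + p) (i + 2) * (e i * (desc_prod e (a + s) (Suc a) * grid e (Suc a) p (s + Suc p))))"
proof -
  let ?D = "desc_prod e (i + p) (i + 2)" and ?D1 = "desc_prod e (a + s) (Suc a)"
  let ?G = "grid e (Suc a) p (s + Suc p)"
  have "grid e a (Suc p) (s + Suc p) = desc_prod e (i + p) (Suc a) * ?G"
    unfolding grid_Suc_first i by (simp add: add.assoc)
  also have "desc_prod e (i + p) (Suc a) = ?D * desc_prod e (Suc i) (Suc a)"
    using desc_prod_append[of "Suc a" "Suc i" "i + p" e] i p by simp
  also have "desc_prod e (Suc i) (Suc a) = e (Suc i) * (e i * ?D1)"
    unfolding i by (simp add: desc_prod_Suc)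
  finally have "e i * grid e a (Suc p) (s + Suc p) = (e i * ?D) * (e (Suc i) * (e i * (?D1 * ?G)))"
    by (simp add: mult.assoc)
  also have "e i * ?D = ?D * e i"
    using desc_prod_commute_e[of "i + 2" i "i + p"] i by simp
  also have "?D * e i * (e (Suc i) * (e i * (?D1 * ?G))) = ?D * ((e i * e (Suc i) * e i) * (?D1 * ?G))"
    by (simp add: mult.assoc)
  finally show ?thesis
    using e_TL_lower[of i] i by (simp add: rsm_mult_left rsm_mult_right)
qed

lemma e_grid_mirror_2: "e (a + s + 3) * grid e a 2 (s + 2) = e (a + s + 1) * grid e a 2 (s + 2)"
proof -
  define i where "i = Suc (a + s)"
  let ?D1 = "desc_prod e (a + s) (Suc a)" and ?D2 = "desc_prod e i (Suc (Suc a))"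
  have G: "grid e (Suc a) 1 (s + 2) = e (Suc (Suc i)) * (e (Suc i) * ?D2)"
    unfolding grid_def i_def by (simp add: desc_prod_Suc numeral_2_eq_2 add.assoc)
  have c: "e i * ?D1 * e (Suc (Suc i)) = e (Suc (Suc i)) * (e i * ?D1)"
    using desc_prod_commute_e[of "Suc a" "Suc (Suc i)" i] unfolding i_def
    by (simp add: desc_prod_Suc[symmetric])
  have "grid e a 2 (s + 2) = e (Suc i) * (e i * ?D1 * e (Suc (Suc i))) * (e (Suc i) * ?D2)"
    unfolding grid_2 i_def by (simp add: desc_prod_Suc mult.assoc)
  then have "e (Suc (Suc i)) * grid e a 2 (s + 2)
      = (e (Suc (Suc i)) * e (Suc i) * e (Suc (Suc i))) * (e i * ?D1 * (e (Suc i) * ?D2))"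
    unfolding c by (simp add: mult.assoc)
  also have "\<dots> = rsm (\<iota>\<^sup>2) (e (Suc (Suc i)) * (e i * ?D1) * (e (Suc i) * ?D2))"
    unfolding e_TL_upper[of "Suc i", simplified] by (simp add: rsm_mult_left mult.assoc)
  also have "\<dots> = rsm (\<iota>\<^sup>2) (e i * ?D1 * grid e (Suc a) 1 (s + 2))"
    unfolding G c[symmetric] by (simp add: mult.assoc)
  also have "\<dots> = e i * grid e a 2 (s + 2)"
    using e_grid_left[OF i_def, of 1] by (simp add: numeral_2_eq_2 desc_prod_def mult.assoc)
  finally show ?thesis unfolding i_def by (simp add: numeral_3_eq_3)
qed

text \<open>Both sides reduce, by one Temperley--Lieb relation each, to the word of e_grid_left.\<close>

lemma e_grid_mirror:
  assumes "2 \<le> p"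
  shows "e (a + s + 1) * grid e a p (s + p) = e (a + s + 2 * p - 1) * grid e a p (s + p)"
  using assms
proof (induction p arbitrary: a s rule: dec_induct)
  case base
  then show ?case using e_grid_mirror_2[of a s] by (simp add: numeral_3_eq_3)
next
  case (step p)
  define i where "i = Suc (a + s)"
  let ?D1 = "desc_prod e (a + s) (Suc a)" and ?G = "grid e (Suc a) p (s + Suc p)"
  have IH: "e (Suc (Suc i)) * ?G = e (i + 2 * p) * ?G"
    using step.IH[of "Suc a" "Suc s"] step.hyps unfolding i_def by (simp add: add.commute)
  have W: "grid e a (Suc p) (s + Suc p) = desc_prod e (i + p) (Suc a) * ?G"
    unfolding grid_Suc_first i_def by (simp add: add.assoc)
  have D: "desc_prod e (i + p) (Suc a) = desc_prod e (i + p) (i + 3) * (e (Suc (Suc i)) * (e (Suc i) * (e i * ?D1)))"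
    using desc_prod_append[of "Suc a" "Suc (Suc i)" "i + p" e] step.hyps
    unfolding i_def by (simp add: desc_prod_Suc numeral_3_eq_3)
  have c: "e i * ?D1 * e (Suc (Suc i)) = e (Suc (Suc i)) * (e i * ?D1)"
    using desc_prod_commute_e[of "Suc a" "Suc (Suc i)" i] unfolding i_def
    by (simp add: desc_prod_Suc[symmetric])
  have ord_le: "i + 2 \<le> i + p" using step.hyps by simp
  have "e (i + 2 * p) * grid e a (Suc p) (s + Suc p) = desc_prod e (i + p) (Suc a) * (e (i + 2 * p) * ?G)"
    unfolding W using desc_prod_commute_e[of "Suc a" "i + 2 * p" "i + p"] step.hyps
    by (simp add: mult.assoc[symmetric])
  also have "\<dots> = desc_prod e (i + p) (i + 3) * (e (Suc (Suc i)) * e (Suc i) * (e i * ?D1 * e (Suc (Suc i))) * ?G)"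
    unfolding IH[symmetric] D by (simp add: mult.assoc)
  also have "\<dots> = desc_prod e (i + p) (i + 3)
      * ((e (Suc (Suc i)) * e (Suc i) * e (Suc (Suc i))) * (e i * ?D1 * ?G))"
    unfolding c by (simp add: mult.assoc)
  also have "\<dots> = rsm (\<iota>\<^sup>2) (desc_prod e (i + p) (i + 2) * (e i * (?D1 * ?G)))"
    unfolding e_TL_upper[of "Suc i", simplified] desc_prod_low[of "i + 2" "i + p" e, OF ord_le]
    by (simp add: rsm_mult_left rsm_mult_right mult.assoc numeral_3_eq_3 numeral_2_eq_2)
  also have "\<dots> = e i * grid e a (Suc p) (s + Suc p)"
    using e_grid_left[OF i_def, of p] step.hyps by simp
  finally show ?case unfolding i_def by (simp add: add.commute)
qed

lemma grid_sandwich: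
  assumes "1 \<le> l" "x \<in> M (a + l)"
  shows "grid e a l l * x * grid e a l l
    = rsm (\<iota>^(l * (l - 1))) (cexp (tr (a + l)) (M a) x * grid e a l l)"
  using assms
proof (induction l arbitrary: x rule: dec_induct)
  case base
  then show ?case using e_sandwich[of x a] by (simp add: grid_1_1[simplified] rsm_1)
next
  case (step l)
  let ?m = "Suc (a + 2 * l)" and ?W = "grid e a l l"
  let ?A = "asc_prod e (Suc (a + l)) (a + 2 * l)" and ?D = "desc_prod e (a + 2 * l) (Suc (a + l))"
  let ?x' = "cexp (tr (Suc (a + l))) (M (a + l)) x"
  let ?y = "cexp (tr (a + l)) (M a) ?x'"
  have x: "x \<in> M (Suc (a + l))" using step by simp
  have x': "?x' \<in> M (a + l)" using cexp_M x by simp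
  have y: "?y \<in> M a" using cexp_M x' by simp
  have W: "grid e a (Suc l) (Suc l) = ?A * ?W * (e ?m * ?D)"
    unfolding grid_Suc_Suc_inner by (simp add: desc_prod_Suc)
  have DxA: "?D * x * ?A = rsm (\<iota>^(2 * (l - 1))) (?x' * e (a + 2 * l))"
    using desc_sandwich[of "a + l" "a + 2 * l" x] x step.hyps by simp
  have c1: "e ?m * (?x' * u) = ?x' * (e ?m * u)" for u
    using e_commute_M[OF x', of ?m] by (simp add: mult.assoc[symmetric])
  have c2: "?W * (e ?m * u) = e ?m * (?W * u)" for u
    using grid_commute_e[of a l l ?m] by (simp add: mult.assoc[symmetric])
  have c3: "?A * ?y = ?y * ?A" using asc_prod_commute_M[OF y] by simp
  have TL: "e ?m * (e (a + 2 * l) * (e ?m * u)) = rsm (\<iota>\<^sup>2) (e ?m * u)" for u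
    using e_TL_upper[of "a + 2 * l"] step.hyps by (simp add: rsm_mult_left mult.assoc[symmetric])
  have "grid e a (Suc l) (Suc l) * x * grid e a (Suc l) (Suc l) = ?A * ?W * e ?m * (?D * x * ?A) * ?W * (e ?m * ?D)"
    unfolding W by (simp add: mult.assoc)
  also have "\<dots> = rsm (\<iota>^(2 * (l - 1))) (?A * ?W * ?x' * (e ?m * (e (a + 2 * l) * (e ?m * (?W * ?D)))))"
    unfolding DxA by (simp add: rsm_mult_left rsm_mult_right mult.assoc c1 c2)
  also have "\<dots> = rsm (\<iota>^(2 * (l - 1)) * \<iota>\<^sup>2) (?A * (?W * ?x' * ?W) * (e ?m * ?D))"
    unfolding TL by (simp add: rsm_rsm rsm_mult_right mult.assoc c2[symmetric])
  also have "\<dots> = rsm (\<iota>^(2 * (l - 1)) * \<iota>\<^sup>2 * \<iota>^(l * (l - 1))) (?y * (?A * ?W * (e ?m * ?D)))"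
    unfolding step.IH[OF x'] by (simp add: rsm_rsm rsm_mult_left rsm_mult_right mult.assoc[symmetric] c3)
  also have "\<iota>^(2 * (l - 1)) * \<iota>\<^sup>2 * \<iota>^(l * (l - 1)) = \<iota>^(Suc l * (Suc l - 1))"
  proof -
    have "2 * (l - 1) + 2 + l * (l - 1) = Suc l * (Suc l - 1)"
      using step.hyps by (cases l) (auto simp: algebra_simps)
    then show ?thesis by (simp only: power_add[symmetric])
  qed
  finally show ?case
    unfolding W using cexp_tower[of a "a + l" x] x by simp
qed

lemma grid_idem: "1 \<le> l \<Longrightarrow> grid e a l l * grid e a l l = rsm (\<iota>^(l * (l - 1))) (grid e a l l)"
  using grid_sandwich[of l 1 a] M_one cexp_id[of a "a + l" 1] by simp

lemma grid_absorb:
  assumes "1 \<le> l"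
  shows "grid e (Suc a) l l * grid e a (Suc l) (Suc l) = rsm (\<iota>^(l * (l - 1))) (grid e a (Suc l) (Suc l))"
  unfolding grid_Suc_Suc_shift_left
  using grid_idem[OF assms, of "Suc a"] by (simp add: mult.assoc[symmetric] rsm_mult_left)

lemma mult_grid_absorb:
  assumes "1 \<le> l"
  shows "u * grid e a l l = rsm (d ^ (l * (l - 1))) (u * grid e a l l * grid e a l l)"
proof -
  have "u * grid e a l l * grid e a l l = rsm (\<iota> ^ (l * (l - 1))) (u * grid e a l l)"
    using grid_idem[OF assms, of a] by (simp add: mult.assoc rsm_mult_right)
  then show ?thesis by (simp add: rsm_rsm d_power_iota_power rsm_1)
qed

lemma tr_grid_Suc_mult:
  assumes "1 \<le> l" "z \<in> M (Suc (a + l))" "a + 2 * Suc l \<le> T"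
  shows "tr T (grid e a (Suc l) (Suc l) * z)
    = \<iota>^(2 * Suc l) * tr T (grid e a l l * cexp (tr (Suc (a + l))) (M (a + l)) z)"
proof -
  let ?m = "Suc (a + 2 * l)" and ?W = "grid e a l l"
  let ?A = "asc_prod e (Suc (a + l)) (a + 2 * l)" and ?D = "desc_prod e (a + 2 * l) (Suc (a + l))"
  let ?z' = "cexp (tr (Suc (a + l))) (M (a + l)) z"
  have z: "z \<in> M (Suc (a + l))" and mT: "?m < T" using assms by simp_all
  have z': "?z' \<in> M (a + l)" using cexp_M z by simp
  have MT: "M ?m \<subseteq> M T" using M_mono mT by simp
  have A: "?A \<in> M ?m" and W: "?W \<in> M ?m" and D: "?D \<in> M ?m"
    by (auto intro: asc_prod_in_M grid_in_M desc_prod_in_M)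
  have DzAW: "?D * z * ?A * ?W \<in> M ?m"
    using A W D z M_mult M_monoD[of z "Suc (a + l)" ?m] by simp
  have W2: "?W \<in> M (a + 2 * l)" by (rule grid_in_M) simp
  have z'2: "?z' \<in> M (a + 2 * l)" using M_monoD[OF z'] by simp
  have z'eW: "?z' * e (a + 2 * l) \<in> M T" "?W * ?z' \<in> M (a + 2 * l)"
    using z'2 W2 assms(1) mT M_mult M_monoD[OF z'2, of T] e_in_M[of "a + 2 * l" T] by auto
  have "tr T (grid e a (Suc l) (Suc l) * z) = tr T ((?A * ?W * e ?m) * (?D * z))"
    unfolding grid_Suc_Suc_inner by (simp add: desc_prod_Suc mult.assoc)
  also have "\<dots> = tr T ((?D * z * ?A * ?W) * e ?m)"
  proof -
    have "?A * ?W * e ?m \<in> M T" using A W MT e_in_M[of ?m T] mT M_mult by auto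
    moreover have "?D * z \<in> M T" using D z MT M_mult M_monoD[of z "Suc (a + l)" T] mT by auto
    ultimately have "tr T ((?A * ?W * e ?m) * (?D * z)) = tr T ((?D * z) * (?A * ?W * e ?m))"
      by (rule tr_commute)
    then show ?thesis by (simp add: mult.assoc)
  qed
  also have "\<dots> = \<iota>\<^sup>2 * tr T (?D * z * ?A * ?W)"
    using tr_mult_e[OF _ DzAW mT] by simp
  also have "tr T (?D * z * ?A * ?W) = \<iota>^(2 * (l - 1)) * tr T (?W * (?z' * e (a + 2 * l)))"
    using desc_sandwich[of "a + l" "a + 2 * l" z] z assms(1) tr_rsm[of _ T] tr_commute[of _ T]
      z'eW W2 M_monoD[of ?W "a + 2 * l" T] assms(3)
    by (simp add: rsm_mult_left M_mult)
  also have "tr T (?W * (?z' * e (a + 2 * l))) = \<iota>\<^sup>2 * tr T (?W * ?z')"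
    using tr_mult_e[of "a + 2 * l" "?W * ?z'" T] z'eW assms(1) assms(3) by (simp add: mult.assoc)
  also have "complex_of_real (\<iota>\<^sup>2) * (\<iota>^(2 * (l - 1)) * (\<iota>\<^sup>2 * tr T (?W * ?z')))
      = \<iota>^(2 * Suc l) * tr T (?W * ?z')"
  proof -
    have "2 + 2 * (l - 1) + 2 = 2 * Suc l" using assms(1) by simp
    then have "\<iota>\<^sup>2 * \<iota>^(2 * (l - 1)) * \<iota>\<^sup>2 = \<iota>^(2 * Suc l)"
      by (simp only: power_add[symmetric])
    then show ?thesis by (simp only: mult.assoc[symmetric] of_real_mult[symmetric])
  qed
  finally show ?thesis .
qed

lemma tr_grid_mult:
  assumes "1 \<le> l" "z \<in> M (a + l)" "a + 2 * l \<le> T"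
  shows "tr T (grid e a l l * z) = \<iota>^(l * (l + 1)) * tr T z"
  using assms
proof (induction l arbitrary: z rule: dec_induct)
  case base
  then show ?case using tr_e_mult[of "Suc a" z T] by (simp add: grid_1_1[simplified] numeral_2_eq_2)
next
  case (step l)
  let ?z' = "cexp (tr (Suc (a + l))) (M (a + l)) z"
  have z: "z \<in> M (Suc (a + l))" using step.prems by simp
  have z': "?z' \<in> M (a + l)" using cexp_M z by simp
  have "tr T ?z' = tr T z"
    using tr_cexp[of "a + l" "Suc (a + l)" z] z tr_mono[of "Suc (a + l)" T] M_monoD[OF z'] step.prems
    by simp
  then have "tr T (grid e a (Suc l) (Suc l) * z) = \<iota>^(2 * Suc l) * (\<iota>^(l * (l + 1)) * tr T z)"
    using tr_grid_Suc_mult[OF step.hyps(1) z] step.IH[OF z'] step.prems by simp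
  also have "\<dots> = \<iota>^(Suc l * (Suc l + 1)) * tr T z"
  proof -
    have "2 * Suc l + l * (l + 1) = Suc l * (Suc l + 1)" by (simp add: algebra_simps)
    then have "\<iota>^(2 * Suc l) * \<iota>^(l * (l + 1)) = \<iota>^(Suc l * (Suc l + 1))"
      by (simp only: power_add[symmetric])
    then show ?thesis by (simp only: mult.assoc[symmetric] of_real_mult[symmetric])
  qed
  finally show ?case .
qed

lemma times_grid_lower_one:
  assumes "1 \<le> l" "x \<in> M (a + 2 * Suc l)"
  shows "\<exists>y\<in>M (Suc a + 2 * l). x * grid e a (Suc l) (Suc l) = y * grid e a (Suc l) (Suc l)"
proof -
  let ?m = "Suc (a + 2 * l)" and ?W = "grid e a (Suc l) (Suc l)" and ?W' = "grid e (Suc a) l l"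
  let ?A = "asc_prod e (Suc (a + l)) (a + 2 * l)" and ?P = "desc_prod e (a + l) (Suc a)"
  define \<kappa> where "\<kappa> = d ^ (Suc l * (Suc l - 1))"
  have W: "?W = ?A * e ?m * ?P * ?W'"
    unfolding grid_Suc_Suc_shift_right by (simp add: asc_prod_Suc)
  have cP: "e ?m * (?P * u) = ?P * (e ?m * u)" for u
    using desc_prod_commute_e[of "Suc a" ?m "a + l"] assms(1) by (simp add: mult.assoc[symmetric])
  have mirror: "e ?m * ?W = e (a + 1) * ?W"
    using e_grid_mirror[of "Suc l" a 0] assms(1) by simp
  obtain y where y: "y \<in> M ?m" "(x * ?W * ?A) * e ?m = y * e ?m"
    using M_times_e[of ?m "x * ?W * ?A"] assms(2) M_mult grid_in_M asc_prod_in_M by auto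
  have "x * ?W = rsm (\<kappa> * \<kappa>) ((x * ?W * ?A) * e ?m * (?P * (?W' * ?W)))"
  proof -
    have absorb: "u * ?W = rsm \<kappa> (u * ?W * ?W)" for u
      unfolding \<kappa>_def by (rule mult_grid_absorb) simp
    have "x * ?W = rsm \<kappa> (x * ?W * ?W)" by (rule absorb)
    also have "x * ?W * ?W = rsm \<kappa> (x * ?W * ?W * ?W)" by (rule absorb)
    also have "x * ?W * ?W * ?W = x * ?W * (?A * e ?m * ?P * ?W') * ?W"
      by (simp only: W[symmetric])
    also have "rsm \<kappa> (rsm \<kappa> (x * ?W * (?A * e ?m * ?P * ?W') * ?W))
        = rsm (\<kappa> * \<kappa>) ((x * ?W * ?A) * e ?m * (?P * (?W' * ?W)))"
      by (simp add: rsm_rsm mult.assoc)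
    finally show ?thesis .
  qed
  also have "(x * ?W * ?A) * e ?m = y * e ?m" by (rule y(2))
  also have "y * e ?m * (?P * (?W' * ?W)) = rsm (\<iota>^(l * (l - 1))) (y * ?P * (e (a + 1) * ?W))"
    unfolding grid_absorb[OF assms(1), of a] by (simp add: rsm_mult_right mult.assoc cP mirror)
  also have "rsm (\<kappa> * \<kappa>) (rsm (\<iota>^(l * (l - 1))) (y * ?P * (e (a + 1) * ?W)))
      = rsm (\<kappa> * \<kappa> * \<iota>^(l * (l - 1))) (y * ?P * e (a + 1)) * ?W"
    by (simp add: rsm_rsm rsm_mult_left mult.assoc)
  finally have "x * ?W = rsm (\<kappa> * \<kappa> * \<iota>^(l * (l - 1))) (y * ?P * e (a + 1)) * ?W" .
  moreover have "rsm (\<kappa> * \<kappa> * \<iota>^(l * (l - 1))) (y * ?P * e (a + 1)) \<in> M (Suc a + 2 * l)"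
    using y(1) assms(1) M_mult desc_prod_in_M[of "Suc a" "a + l" ?m] e_in_M[of "Suc a" ?m]
    by (simp add: M_rsm)
  ultimately show ?thesis by blast
qed

lemma times_grid_lower:
  assumes "1 \<le> l" "x \<in> M (a + 2 * l)"
  shows "\<exists>y\<in>M (a + l). x * grid e a l l = y * grid e a l l"
  using assms
proof (induction l arbitrary: a x rule: dec_induct)
  case base
  then show ?case using M_times_e[of "Suc a" x] by (simp add: grid_1_1[simplified])
next
  case (step l)
  obtain y where y: "y \<in> M (Suc a + 2 * l)" "x * grid e a (Suc l) (Suc l) = y * grid e a (Suc l) (Suc l)"
    using times_grid_lower_one[of l x a] step.hyps(1) step.prems by auto
  obtain y' where y': "y' \<in> M (Suc a + l)" "y * grid e (Suc a) l l = y' * grid e (Suc a) l l"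
    using step.IH[OF y(1)] by blast
  have "x * grid e a (Suc l) (Suc l) = y' * grid e a (Suc l) (Suc l)"
    using y(2) y'(2) unfolding grid_Suc_Suc_shift_left by (simp add: mult.assoc[symmetric])
  then show ?case using y'(1) by auto
qed

subsection \<open>The projections f^{a+l}_a\<close>

lemma jw_f_eq: "jw_f sm e d a l = rsm (d ^ (l * (l - 1))) (grid e a l l)"
  unfolding jw_f_def rsm_def grid_def ..

lemma jw_f_in_M: "a + 2 * l \<le> n \<Longrightarrow> jw_f sm e d a l \<in> M n"
  unfolding jw_f_eq by (intro M_rsm grid_in_M) simp

lemma star_jw_f: "star (jw_f sm e d a l) = jw_f sm e d a l"
  unfolding jw_f_eq by (simp add: star_rsm star_grid)

lemma jw_f_sandwich:
  assumes "1 \<le> l" "x \<in> M (a + l)"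
  shows "jw_f sm e d a l * x * jw_f sm e d a l = cexp (tr (a + l)) (M a) x * jw_f sm e d a l"
  unfolding jw_f_eq
  by (simp add: grid_sandwich[OF assms] rsm_mult_left rsm_mult_right rsm_rsm mult.commute
      d_power_iota_power mult.assoc[symmetric] rsm_1)

lemma jw_f_idem: "1 \<le> l \<Longrightarrow> jw_f sm e d a l * jw_f sm e d a l = jw_f sm e d a l"
  using jw_f_sandwich[of l 1 a] M_one cexp_id[of a "a + l" 1] by simp

lemma tr_jw_f_mult:
  assumes "1 \<le> l" "z \<in> M (a + l)" "a + 2 * l \<le> T"
  shows "tr T (jw_f sm e d a l * z) = complex_of_real (1 / (d ^ l)\<^sup>2) * tr T z"
proof -
  have "l * (l + 1) = l * (l - 1) + 2 * l" using assms(1) by (cases l) auto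
  then have "d ^ (l * (l - 1)) * \<iota> ^ (l * (l + 1)) = (d ^ (l * (l - 1)) * \<iota> ^ (l * (l - 1))) * \<iota> ^ (2 * l)"
    by (simp only: power_add mult.assoc)
  also have "\<dots> = 1 / (d ^ l)\<^sup>2" by (simp add: d_power_iota_power iota_power)
  finally have coeff: "d ^ (l * (l - 1)) * \<iota> ^ (l * (l + 1)) = 1 / (d ^ l)\<^sup>2" .
  have "grid e a l l * z \<in> M T"
    using assms grid_in_M M_mult M_monoD[of z "a + l" T] by auto
  then have "tr T (jw_f sm e d a l * z)
      = complex_of_real (d ^ (l * (l - 1))) * (complex_of_real (\<iota> ^ (l * (l + 1))) * tr T z)"
    unfolding jw_f_eq rsm_mult_left using tr_rsm tr_grid_mult[OF assms] by simp
  also have "\<dots> = complex_of_real (1 / (d ^ l)\<^sup>2) * tr T z"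
    by (simp only: mult.assoc[symmetric] of_real_mult[symmetric] coeff)
  finally show ?thesis .
qed

lemma cexp_jw_f:
  assumes "1 \<le> l"
  shows "cexp (tr (a + 2 * l)) (M (a + l)) (jw_f sm e d a l) = rsm (1 / (d ^ l)\<^sup>2) 1"
proof (rule cexp_M_eqI)
  fix z assume z: "z \<in> M (a + l)"
  then have "z \<in> M (a + 2 * l)" using M_monoD by simp
  then show "tr (a + 2 * l) (rsm (1 / (d ^ l)\<^sup>2) 1 * z) = tr (a + 2 * l) (jw_f sm e d a l * z)"
    using tr_jw_f_mult[OF assms z] tr_rsm by (simp add: rsm_mult_left)
qed (auto intro: M_rsm M_one)

lemma jw_f_absorb:
  assumes "1 \<le> l"
  shows "(\<lambda>x. x * jw_f sm e d a l) ` M (a + 2 * l) = (\<lambda>x. x * jw_f sm e d a l) ` M (a + l)"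
proof
  show "(\<lambda>x. x * jw_f sm e d a l) ` M (a + l) \<subseteq> (\<lambda>x. x * jw_f sm e d a l) ` M (a + 2 * l)"
    using M_mono[of "a + l" "a + 2 * l"] by auto
  show "(\<lambda>x. x * jw_f sm e d a l) ` M (a + 2 * l) \<subseteq> (\<lambda>x. x * jw_f sm e d a l) ` M (a + l)"
  proof clarify
    fix x assume "x \<in> M (a + 2 * l)"
    then obtain y where "y \<in> M (a + l)" "x * grid e a l l = y * grid e a l l"
      using times_grid_lower assms by blast
    then show "x * jw_f sm e d a l \<in> (\<lambda>x. x * jw_f sm e d a l) ` M (a + l)"
      unfolding jw_f_eq by (auto simp: rsm_mult_right)
  qed
qed

lemma jw_f_commute:
  "a + 2 * l \<le> b \<Longrightarrow> jw_f sm e d a l * jw_f sm e d b l = jw_f sm e d b l * jw_f sm e d a l"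
  using grid_commute_M[OF jw_f_in_M, of a l "a + 2 * l" b l l]
  unfolding jw_f_eq[of b] by (simp add: rsm_mult_left rsm_mult_right)

lemma jw_f_TL_upper:
  assumes "1 \<le> l"
  shows "jw_f sm e d (a + l) l * jw_f sm e d a l * jw_f sm e d (a + l) l
    = rsm (1 / (d ^ l)\<^sup>2) (jw_f sm e d (a + l) l)"
proof -
  have "jw_f sm e d a l \<in> M (a + l + l)" by (rule jw_f_in_M) simp
  then show ?thesis
    using jw_f_sandwich[OF assms] cexp_jw_f[OF assms, of a] by (simp add: mult_2 add.assoc rsm_mult_left)
qed

lemma jw_f_TL_lower:
  assumes "1 \<le> l"
  shows "jw_f sm e d a l * jw_f sm e d (a + l) l * jw_f sm e d a l
    = rsm (1 / (d ^ l)\<^sup>2) (jw_f sm e d a l)"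
proof (rule projection_sandwich_dual[OF subalg_M trace_M])
  show "jw_f sm e d a l \<in> M (a + 3 * l)" "jw_f sm e d (a + l) l \<in> M (a + 3 * l)"
    by (auto intro: jw_f_in_M)
  have "jw_f sm e d a l \<in> M (a + l + l)" by (rule jw_f_in_M) simp
  then show "tr (a + 3 * l) (jw_f sm e d (a + l) l * jw_f sm e d a l)
      = complex_of_real (1 / (d ^ l)\<^sup>2) * tr (a + 3 * l) (jw_f sm e d a l)"
    using tr_jw_f_mult[OF assms] by simp
qed (use assms jw_f_idem star_jw_f jw_f_TL_upper in auto)

end

theorem mainTheorem8:
  fixes sm :: "complex \<Rightarrow> 'a::ring_1 \<Rightarrow> 'a" and star :: "'a \<Rightarrow> 'a"
    and M :: "nat \<Rightarrow> 'a set" and tr :: "nat \<Rightarrow> 'a \<Rightarrow> complex" and e :: "nat \<Rightarrow> 'a"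
    and d :: real and j k :: nat
  assumes "markov_tower sm star M tr e d"
    and "k \<ge> 1"
  shows "markov_tower sm star (\<lambda>n. M (j + n * k)) (\<lambda>n. tr (j + n * k))
           (\<lambda>n. jw_f sm e d (j + (n - 1) * k) k) (d ^ k)"
proof -
  interpret markov sm star M tr e d by (rule markov.intro) (rule assms(1))
  let ?a = "\<lambda>n. j + (n - 1) * k" and ?g = "\<lambda>n. jw_f sm e d (j + (n - 1) * k) k"
  have level: "?a n + k = j + n * k" "?a n + 2 * k = j + Suc n * k"
    if "1 \<le> n" for n using that by (cases n; simp)+
  have far: "?a n + 2 * k \<le> ?a n'" if "1 \<le> n" "n + 1 < n'" for n n'
  proof -
    have "(n - 1 + 2) * k \<le> (n' - 1) * k" using that by (intro mult_le_mono1) simp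
    then show ?thesis by (simp add: algebra_simps)
  qed
  show ?thesis
    unfolding markov_tower_def
  proof (intro conjI allI impI ballI)
    fix n :: nat assume n: "1 \<le> n"
    note lv = level[OF n]
    show "?g n \<in> M (j + Suc n * k)" using jw_f_in_M lv by simp
    show "?g n * ?g n = ?g n" by (rule jw_f_idem[OF assms(2)])
    show "star (?g n) = ?g n" by (rule star_jw_f)
    show "?g n * ?g (Suc n) * ?g n = sm (complex_of_real (1 / (d ^ k)\<^sup>2)) (?g n)"
      using jw_f_TL_lower[OF assms(2), of "?a n", unfolded lv(1)] by (simp add: rsm_def)
    show "?g (Suc n) * ?g n * ?g (Suc n) = sm (complex_of_real (1 / (d ^ k)\<^sup>2)) (?g (Suc n))"
      using jw_f_TL_upper[OF assms(2), of "?a n", unfolded lv(1)] by (simp add: rsm_def)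
    show "x \<in> M (j + n * k) \<Longrightarrow> ?g n * x * ?g n = cexp (tr (j + n * k)) (M (j + (n - 1) * k)) x * ?g n" for x
      using jw_f_sandwich[OF assms(2), of x "?a n", unfolded lv(1)] by simp
    show "cexp (tr (j + Suc n * k)) (M (j + n * k)) (?g n) = sm (complex_of_real (1 / (d ^ k)\<^sup>2)) 1"
      using cexp_jw_f[OF assms(2), of "?a n", unfolded lv] by (simp add: rsm_def)
    show "(\<lambda>x. x * ?g n) ` M (j + Suc n * k) = (\<lambda>x. x * ?g n) ` M (j + n * k)"
      using jw_f_absorb[OF assms(2), of "?a n", unfolded lv] by simp
  next
    fix n n' :: nat assume "1 \<le> n" "1 \<le> n'" "n + 1 < n' \<or> n' + 1 < n"
    then show "?g n * ?g n' = ?g n' * ?g n" using jw_f_commute far by metis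
  qed (use star_alg d_pos subalg_M trace_M M_mono tr_mono in auto)
qed

end
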